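(* Let $G$ be a finite simple graph. If $\tau^*_2(G) \leq 2\nu(G)$ and $\tau^*_3(G) \leq 2\nu(G)$, then $\tau^*_k(G) \leq 2\nu(G)$ for all integers $k \geq 2$.
   Context: A triangle of $G$ is a set of three pairwise adjacent vertices, identified with its three edges. $\nu(G)$ is the maximum number of pairwise edge-disjoint triangles in $G$. For an integer $k\ge1$, a $k$-multi-transversal of $G$ is a multiset $F$ of edges such that every triangle of $G$ contains at least $k$ elements of $F$ (counted with multiplicity); $\tau^*_k(G)$ is the minimum of $|F|/k$ over all $k$-multi-transversals $F$. *)

theory Defs
  imports Complex_Main "HOL-Library.Multiset"
begin

definition simple_graph :: "'a set \<Rightarrow> 'a set set \<Rightarrow> bool" where
  "simple_graph V E \<longleftrightarrow> finite V \<and> (\<forall>e\<in>E. e \<subseteq> V \<and> card e = 2)"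

definition tri_edges :: "'a set \<Rightarrow> 'a set set" where
  "tri_edges T = {e. e \<subseteq> T \<and> card e = 2}"

definition triangles :: "'a set \<Rightarrow> 'a set set \<Rightarrow> 'a set set" where
  "triangles V E = {T. T \<subseteq> V \<and> card T = 3 \<and> (\<forall>x\<in>T. \<forall>y\<in>T. x \<noteq> y \<longrightarrow> {x, y} \<in> E)}"

definition tri_packing_number :: "'a set \<Rightarrow> 'a set set \<Rightarrow> nat" where
  "tri_packing_number V E = Max {card P | P. P \<subseteq> triangles V E \<and>
      (\<forall>S\<in>P. \<forall>T\<in>P. S \<noteq> T \<longrightarrow> tri_edges S \<inter> tri_edges T = {})}"

definition multi_transversal :: "'a set \<Rightarrow> 'a set set \<Rightarrow> nat \<Rightarrow> 'a set multiset \<Rightarrow> bool" where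
  "multi_transversal V E k F \<longleftrightarrow> set_mset F \<subseteq> E \<and>
     (\<forall>T\<in>triangles V E. (\<Sum>e\<in>tri_edges T. count F e) \<ge> k)"

definition tau_star :: "'a set \<Rightarrow> 'a set set \<Rightarrow> nat \<Rightarrow> real" where
  "tau_star V E k = Inf {real (size F) / real k | F. multi_transversal V E k F}"

end

theory Submission
  imports Defs
begin

text \<open>Multi-transversals can be added: the sum of a $k_1$- and a $k_2$-multi-transversal is a
  $(k_1+k_2)$-multi-transversal. Hence $k \mapsto k\,\tau^*_k(G)$ is subadditive, and a
  subadditive function bounded by $2\nu k$ at $k = 2$ and $k = 3$ is bounded by $2\nu k$ for
  every $k \ge 2$, since every such $k$ is a sum of $2$s and $3$s.\<close>

lemma simple_graph_finite_edges:
  assumes "simple_graph V E"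
  shows "finite E"
proof -
  have "E \<subseteq> Pow V" and "finite V"
    using assms unfolding simple_graph_def by auto
  then show ?thesis
    by (meson finite_Pow_iff finite_subset)
qed

lemma triangle_obtain_graph_edge:
  assumes "T \<in> triangles V E"
  obtains e where "e \<in> tri_edges T" "e \<in> E"
proof -
  have "card T = 3"
    using assms unfolding triangles_def by auto
  then obtain x y z where "T = {x, y, z}" "x \<noteq> y"
    by (auto simp: card_3_iff)
  then have "{x, y} \<in> tri_edges T" "{x, y} \<in> E"
    using assms unfolding triangles_def tri_edges_def by auto
  then show ?thesis
    using that by blast
qed

lemma finite_tri_edges:
  assumes "finite T"
  shows "finite (tri_edges T)"
  using assms unfolding tri_edges_def by simp

lemma multi_transversal_repeat_edges:
  assumes "finite E"
  shows "multi_transversal V E k (repeat_mset k (mset_set E))"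
  unfolding multi_transversal_def
proof (intro conjI ballI)
  show "set_mset (repeat_mset k (mset_set E)) \<subseteq> E"
    by (metis count_mset_set(3) count_repeat_mset mult_0_right not_in_iff subsetI)
next
  fix T
  assume T: "T \<in> triangles V E"
  obtain e where e: "e \<in> tri_edges T" "e \<in> E"
    using triangle_obtain_graph_edge[OF T] .
  have "finite T"
    using T unfolding triangles_def by (auto intro: card_ge_0_finite)
  then have "count (repeat_mset k (mset_set E)) e \<le> (\<Sum>e\<in>tri_edges T. count (repeat_mset k (mset_set E)) e)"
    using e(1) by (intro member_le_sum) (auto simp: finite_tri_edges)
  then show "k \<le> (\<Sum>e\<in>tri_edges T. count (repeat_mset k (mset_set E)) e)"
    using assms e(2) by simp
qed

lemma multi_transversal_add:
  assumes "multi_transversal V E k1 F1" "multi_transversal V E k2 F2"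
  shows "multi_transversal V E (k1 + k2) (F1 + F2)"
  using assms unfolding multi_transversal_def
  by (auto simp: sum.distrib intro: add_mono)

lemma tau_star_le:
  assumes "multi_transversal V E k F"
  shows "tau_star V E k \<le> real (size F) / real k"
  unfolding tau_star_def
proof (rule cInf_lower)
  show "real (size F) / real k \<in> {real (size F) / real k | F. multi_transversal V E k F}"
    using assms by blast
  show "bdd_below {real (size F) / real k | F. multi_transversal V E k F}"
    by (rule bdd_belowI[of _ 0]) auto
qed

lemma tau_star_attained:
  assumes "finite E"
  obtains F where "multi_transversal V E k F" "tau_star V E k = real (size F) / real k"
proof -
  define m where "m = (LEAST n. \<exists>F. multi_transversal V E k F \<and> size F = n)"
  have "\<exists>n F. multi_transversal V E k F \<and> size F = n"
    using multi_transversal_repeat_edges[OF assms] by blast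
  from LeastI_ex[OF this] obtain F where F: "multi_transversal V E k F" "size F = m"
    unfolding m_def by blast
  have "tau_star V E k = real (size F) / real k"
    unfolding tau_star_def
  proof (rule cInf_eq_minimum)
    show "real (size F) / real k \<in> {real (size F) / real k | F. multi_transversal V E k F}"
      using F by blast
  next
    fix x
    assume "x \<in> {real (size F) / real k | F. multi_transversal V E k F}"
    then obtain G where G: "multi_transversal V E k G" "x = real (size G) / real k"
      by blast
    have "m \<le> size G"
      unfolding m_def using G(1) by (metis (mono_tags) Least_le)
    then show "real (size F) / real k \<le> x"
      using F G by (simp add: divide_right_mono)
  qed
  then show ?thesis
    using F that by blast
qed

lemma scaled_tau_star_subadditive:
  assumes "finite E" "k1 > 0" "k2 > 0"
  shows "real (k1 + k2) * tau_star V E (k1 + k2)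
           \<le> real k1 * tau_star V E k1 + real k2 * tau_star V E k2"
proof -
  obtain F1 where F1: "multi_transversal V E k1 F1" "tau_star V E k1 = real (size F1) / real k1"
    using tau_star_attained[OF assms(1)] .
  obtain F2 where F2: "multi_transversal V E k2 F2" "tau_star V E k2 = real (size F2) / real k2"
    using tau_star_attained[OF assms(1)] .
  have "tau_star V E (k1 + k2) \<le> real (size (F1 + F2)) / real (k1 + k2)"
    using tau_star_le[OF multi_transversal_add[OF F1(1) F2(1)]] .
  then have "real (k1 + k2) * tau_star V E (k1 + k2) \<le> real (size F1) + real (size F2)"
    using assms(2) by (simp add: field_simps)
  also have "\<dots> = real k1 * tau_star V E k1 + real k2 * tau_star V E k2"
    using F1(2) F2(2) assms(2,3) by simp
  finally show ?thesis .
qed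

lemma subadditive_le_linear_from_two_three:
  fixes f :: "nat \<Rightarrow> real"
  assumes subadd: "\<And>m n. m \<ge> 2 \<Longrightarrow> n \<ge> 2 \<Longrightarrow> f (m + n) \<le> f m + f n"
    and f2: "f 2 \<le> 2 * c" and f3: "f 3 \<le> 3 * c"
    and "k \<ge> 2"
  shows "f k \<le> real k * c"
  using \<open>k \<ge> 2\<close>
proof (induction k rule: less_induct)
  case (less k)
  consider "k = 2" | "k = 3" | "k \<ge> 4"
    using less.prems by linarith
  then show ?case
  proof cases
    case 3
    then have "f k = f ((k - 2) + 2)"
      by (intro arg_cong[where f = f]) linarith
    also have "\<dots> \<le> f (k - 2) + f 2"
      using 3 by (intro subadd) auto
    also have "\<dots> \<le> real (k - 2) * c + 2 * c"
      using 3 f2 less.IH[of "k - 2"] by (intro add_mono) auto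
    also have "\<dots> = real k * c"
      using 3 by (simp add: of_nat_diff algebra_simps)
    finally show ?thesis .
  qed (use f2 f3 in auto)
qed

theorem proposition3:
  fixes V :: "'a set" and E :: "'a set set"
  assumes "simple_graph V E"
    and "tau_star V E 2 \<le> 2 * real (tri_packing_number V E)"
    and "tau_star V E 3 \<le> 2 * real (tri_packing_number V E)"
  shows "\<forall>k::nat. k \<ge> 2 \<longrightarrow> tau_star V E k \<le> 2 * real (tri_packing_number V E)"
proof (intro allI impI)
  fix k :: nat
  assume "k \<ge> 2"
  define \<nu> where "\<nu> = real (tri_packing_number V E)"
  have "finite E"
    using simple_graph_finite_edges[OF assms(1)] .
  have "real k * tau_star V E k \<le> real k * (2 * \<nu>)"
  proof (rule subadditive_le_linear_from_two_three[where f = "\<lambda>k. real k * tau_star V E k"])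
    show "real (m + n) * tau_star V E (m + n) \<le> real m * tau_star V E m + real n * tau_star V E n"
      if "m \<ge> 2" "n \<ge> 2" for m n
      using scaled_tau_star_subadditive[OF \<open>finite E\<close>] that by simp
  qed (use assms(2,3) \<open>k \<ge> 2\<close> in \<open>auto simp: \<nu>_def\<close>)
  then show "tau_star V E k \<le> 2 * real (tri_packing_number V E)"
    using \<open>k \<ge> 2\<close> unfolding \<nu>_def by simp
qed

end
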